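(* Let $X$ be a locally convex space, let $A:X\rightrightarrows X^{*}$ be representable, and let $C\subset X$ be closed and convex. If $D(A)\cap\operatorname{int}C\neq\emptyset$, then $A+N_{C}$ is representable.
   Context: $X$ is a non-trivial Hausdorff locally convex space with topology $\tau$, $X^{*}$ its dual with weak-star topology $\omega^*$, $Z=X\times X^*$ with topology $\tau\times\omega^*$, $c(x,x^{*})=\langle x,x^{*}\rangle$. Operators are identified with their graphs; $D(A)$ is the domain. $N_C$ is the normal cone: $N_C(x)=\{x^*\mid\langle y-x,x^*\rangle\le0\ \forall y\in C\}$ for $x\in C$, $N_C(x)=\emptyset$ otherwise; $(A+N_C)(x)=Ax+N_C(x)$. $T$ is representable if there is a proper convex $\tau\times\omega^{*}$-lsc $h:Z\to\overline{\mathbb{R}}$ with $h\ge c$ and $\{z\mid h(z)=c(z)\}=\operatorname{Graph}T$. *)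

theory Defs
  imports "HOL-Analysis.Analysis"
begin

definition lcs :: "'a::real_vector topology \<Rightarrow> bool" where
  "lcs \<tau> \<longleftrightarrow>
     topspace \<tau> = UNIV \<and>
     Hausdorff_space \<tau> \<and>
     continuous_map (prod_topology \<tau> \<tau>) \<tau> (\<lambda>(x, y). x + y) \<and>
     continuous_map (prod_topology euclideanreal \<tau>) \<tau> (\<lambda>(t, x). t *\<^sub>R x) \<and>
     (\<forall>U. openin \<tau> U \<and> 0 \<in> U \<longrightarrow> (\<exists>V. openin \<tau> V \<and> convex V \<and> 0 \<in> V \<and> V \<subseteq> U))"

definition dual :: "'a::real_vector topology \<Rightarrow> ('a \<Rightarrow> real) set" where
  "dual \<tau> = {f. linear f \<and> continuous_map \<tau> euclideanreal f}"

definition wstar :: "'a::real_vector topology \<Rightarrow> ('a \<Rightarrow> real) topology" where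
  "wstar \<tau> = subtopology (product_topology (\<lambda>_. euclideanreal) UNIV) (dual \<tau>)"

definition Ztop :: "'a::real_vector topology \<Rightarrow> ('a \<times> ('a \<Rightarrow> real)) topology" where
  "Ztop \<tau> = prod_topology \<tau> (wstar \<tau>)"

definition coupling :: "'a \<times> ('a \<Rightarrow> real) \<Rightarrow> ereal" where
  "coupling z = ereal (snd z (fst z))"

definition zcomb :: "real \<Rightarrow> 'a::real_vector \<times> ('a \<Rightarrow> real) \<Rightarrow> 'a \<times> ('a \<Rightarrow> real) \<Rightarrow> 'a \<times> ('a \<Rightarrow> real)" where
  "zcomb t z w = (t *\<^sub>R fst z + (1 - t) *\<^sub>R fst w, \<lambda>y. t * snd z y + (1 - t) * snd w y)"

definition representable :: "'a::real_vector topology \<Rightarrow> ('a \<times> ('a \<Rightarrow> real)) set \<Rightarrow> bool" where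
  "representable \<tau> T \<longleftrightarrow>
     (\<exists>h :: 'a \<times> ('a \<Rightarrow> real) \<Rightarrow> ereal.
        \<comment> \<open>proper\<close>
        (\<forall>z\<in>topspace (Ztop \<tau>). h z \<noteq> -\<infinity>) \<and> (\<exists>z\<in>topspace (Ztop \<tau>). h z \<noteq> \<infinity>) \<and>
        \<comment> \<open>convex\<close>
        (\<forall>z\<in>topspace (Ztop \<tau>). \<forall>w\<in>topspace (Ztop \<tau>). \<forall>t::real. 0 < t \<and> t < 1 \<longrightarrow>
            h (zcomb t z w) \<le> ereal t * h z + ereal (1 - t) * h w) \<and>
        \<comment> \<open>lower semicontinuous w.r.t. tau x omega*\<close>
        (\<forall>r::real. closedin (Ztop \<tau>) {z \<in> topspace (Ztop \<tau>). h z \<le> ereal r}) \<and>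
        (\<forall>z\<in>topspace (Ztop \<tau>). coupling z \<le> h z) \<and>
        {z \<in> topspace (Ztop \<tau>). h z = coupling z} = T)"

definition normal_cone :: "'a::real_vector topology \<Rightarrow> 'a set \<Rightarrow> 'a \<Rightarrow> ('a \<Rightarrow> real) set" where
  "normal_cone \<tau> C x = (if x \<in> C then {f \<in> dual \<tau>. \<forall>y\<in>C. f (y - x) \<le> 0} else {})"

definition plus_normal :: "'a::real_vector topology \<Rightarrow> ('a \<times> ('a \<Rightarrow> real)) set \<Rightarrow> 'a set \<Rightarrow> ('a \<times> ('a \<Rightarrow> real)) set" where
  "plus_normal \<tau> A C = {(x, \<lambda>y. a y + n y) | x a n. (x, a) \<in> A \<and> n \<in> normal_cone \<tau> C x}"

end

theory Submission
  imports Defs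
begin

(* If h represents A, then
     H (x, x* ) = inf_y* (\<iota>_C x + h (x, x* - y* ) + \<sigma>_C y* )
   represents A + N_C: H is convex and H \<ge> c, with equality exactly where the infimum is
   attained at some y* \<in> N_C x with (x, x* - y* ) \<in> A. The work lies in attainment and lower
   semicontinuity. Convexity of h and (x0, a0) \<in> A give
   h (x, w) \<ge> \<langle>x0, w\<rangle> + \<langle>x, a0\<rangle> - \<langle>x0, a0\<rangle>, and x0 + V \<subseteq> C
   gives \<sigma>_C y* \<ge> \<langle>x0, y*\<rangle> + sup_V y*. So the sublevel sets in y* lie in polars
   of V, which are weak-star compact by Banach-Alaoglu: the infimum is attained, and the tube
   lemma makes H lower semicontinuous. *)

lemma lcs_topspace [simp]: "lcs \<tau> \<Longrightarrow> topspace \<tau> = UNIV"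
  by (simp add: lcs_def)

lemma lcs_continuous_map_scaleR_left:
  assumes "lcs \<tau>"
  shows "continuous_map (prod_topology euclideanreal \<tau>) \<tau> (\<lambda>(t, x). t *\<^sub>R x)"
  using assms by (simp add: lcs_def)

lemma lcs_continuous_map_affine:
  assumes "lcs \<tau>"
  shows "continuous_map \<tau> \<tau> (\<lambda>x. c *\<^sub>R x + b)"
proof -
  have "continuous_map \<tau> (prod_topology euclideanreal \<tau>) (\<lambda>x. (c, x))"
    using assms by (simp add: continuous_map_pairwise o_def)
  from continuous_map_compose[OF this lcs_continuous_map_scaleR_left[OF assms]]
  have scale: "continuous_map \<tau> \<tau> (\<lambda>x. c *\<^sub>R x)"
    by (simp add: o_def)
  have "continuous_map \<tau> (prod_topology \<tau> \<tau>) (\<lambda>x. (c *\<^sub>R x, b))"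
    using assms scale by (simp add: continuous_map_pairwise o_def)
  moreover have "continuous_map (prod_topology \<tau> \<tau>) \<tau> (\<lambda>(x, y). x + y)"
    using assms by (simp add: lcs_def)
  ultimately show ?thesis
    using continuous_map_compose by (fastforce simp: o_def)
qed

lemma lcs_continuous_map_ray:
  assumes "lcs \<tau>"
  shows "continuous_map euclideanreal \<tau> (\<lambda>t. t *\<^sub>R x)"
proof -
  have "continuous_map euclideanreal (prod_topology euclideanreal \<tau>) (\<lambda>t. (t, x))"
    using assms by (simp add: continuous_map_pairwise o_def)
  from continuous_map_compose[OF this lcs_continuous_map_scaleR_left[OF assms]] show ?thesis
    by (simp add: o_def)
qed

lemma lcs_absorbing:
  assumes "lcs \<tau>" "openin \<tau> V" "0 \<in> V"
  shows "\<exists>s>0. s *\<^sub>R x \<in> V \<and> (- s) *\<^sub>R x \<in> V"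
proof -
  have "open {t. t *\<^sub>R x \<in> V}"
    using openin_continuous_map_preimage[OF lcs_continuous_map_ray[OF assms(1)] assms(2)] by simp
  moreover have "(0::real) \<in> {t. t *\<^sub>R x \<in> V}"
    using assms by simp
  ultimately obtain e where "e > 0" "ball 0 e \<subseteq> {t. t *\<^sub>R x \<in> V}"
    by (meson open_contains_ball)
  then show ?thesis
    by (intro exI[of _ "e/2"]) (auto simp: subset_iff simp del: scaleR_minus_left)
qed

lemma linear_continuous_if_bounded_above_on_nhd:
  fixes f :: "'a::real_vector \<Rightarrow> real"
  assumes lcs: "lcs \<tau>" and V: "openin \<tau> V" "0 \<in> V"
    and f: "linear f" and bound: "\<forall>u\<in>V. f u \<le> M"
  shows "continuous_map \<tau> euclideanreal f"
  unfolding Met_TC.continuous_map_to_metric[simplified]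
proof (intro ballI allI impI)
  fix x and e :: real
  assume "e > 0"
  have "0 \<le> M"
    using bound V(2) linear_0[OF f] by force
  define k where "k = (M + 1) / e"
  have "k > 0"
    using \<open>0 \<le> M\<close> \<open>e > 0\<close> by (simp add: k_def)
  define W where "W = {w. k *\<^sub>R (w - x) \<in> V} \<inter> {w. k *\<^sub>R (x - w) \<in> V}"
  have "openin \<tau> {w. c *\<^sub>R w + b \<in> V}" for c b
    using openin_continuous_map_preimage[OF lcs_continuous_map_affine[OF lcs] V(1)] lcs by simp
  from this[of k "- k *\<^sub>R x"] this[of "- k" "k *\<^sub>R x"] have "openin \<tau> W"
    unfolding W_def by (intro openin_Int) (simp_all add: scaleR_diff_right)
  moreover have "x \<in> W"
    using V(2) by (simp add: W_def)
  moreover have "dist (f x) (f w) < e" if "w \<in> W" for w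
  proof -
    have "f (k *\<^sub>R (w - x)) = k * (f w - f x)" "f (k *\<^sub>R (x - w)) = - k * (f w - f x)"
      using f by (simp_all add: linear_diff linear_scale algebra_simps)
    then have "k * (f w - f x) \<le> M" "- k * (f w - f x) \<le> M"
      using that bound by (auto simp: W_def)
    then have "k * \<bar>f w - f x\<bar> \<le> M"
      using \<open>k > 0\<close> by (simp add: abs_if algebra_simps)
    also have "\<dots> < k * e"
      using \<open>e > 0\<close> by (simp add: k_def)
    finally show ?thesis
      using \<open>k > 0\<close> by (simp add: dist_real_def abs_minus_commute)
  qed
  ultimately show "\<exists>U. openin \<tau> U \<and> x \<in> U \<and> (\<forall>y\<in>U. dist (f x) (f y) < e)"
    by blast
qed

lemma dual_linear: "f \<in> dual \<tau> \<Longrightarrow> linear f"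
  by (simp add: dual_def)

lemma dual_zero: "(\<lambda>_. 0) \<in> dual \<tau>"
  by (simp add: dual_def linear_zero)

lemma dual_lincomb:
  assumes "f \<in> dual \<tau>" "g \<in> dual \<tau>"
  shows "(\<lambda>v. a * f v + b * g v) \<in> dual \<tau>"
  using assms unfolding dual_def
  by (auto simp: linear_iff algebra_simps intro!: continuous_map_add continuous_map_real_mult)

lemma dual_add: "f \<in> dual \<tau> \<Longrightarrow> g \<in> dual \<tau> \<Longrightarrow> (\<lambda>v. f v + g v) \<in> dual \<tau>"
  using dual_lincomb[of f \<tau> g 1 1] by simp

lemma dual_diff: "f \<in> dual \<tau> \<Longrightarrow> g \<in> dual \<tau> \<Longrightarrow> f - g \<in> dual \<tau>"
  using dual_lincomb[of f \<tau> g 1 "-1"] by (simp add: fun_diff_def)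

lemma topspace_wstar [simp]: "topspace (wstar \<tau>) = dual \<tau>"
  by (simp add: wstar_def)

abbreviation pointwise_topology :: "('a \<Rightarrow> real) topology" where
  "pointwise_topology \<equiv> product_topology (\<lambda>_. euclideanreal) UNIV"

lemma continuous_map_pointwise_eval: "continuous_map pointwise_topology euclideanreal (\<lambda>f. f x)"
  using continuous_map_product_projection[of x UNIV "\<lambda>_. euclideanreal"] by simp

lemma continuous_map_wstar_eval: "continuous_map (wstar \<tau>) euclideanreal (\<lambda>f. f x)"
  unfolding wstar_def by (rule continuous_map_from_subtopology[OF continuous_map_pointwise_eval])

lemma closedin_continuous_preimages_Inter:
  assumes "\<And>i. continuous_map X euclideanreal (g i)" and "\<And>i. closed (S i)"
  shows "closedin X {p \<in> topspace X. \<forall>i. g i p \<in> S i}"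
proof -
  have "closedin X (\<Inter>i. {p \<in> topspace X. g i p \<in> S i})"
    using assms by (intro closedin_Inter) (auto intro!: closedin_continuous_map_preimage)
  moreover have "(\<Inter>i. {p \<in> topspace X. g i p \<in> S i}) = {p \<in> topspace X. \<forall>i. g i p \<in> S i}"
    by auto
  ultimately show ?thesis
    by simp
qed

lemma closedin_pointwise_linear: "closedin pointwise_topology {f::'a::real_vector \<Rightarrow> real. linear f}"
proof -
  have "closedin pointwise_topology
          {f. \<forall>i::'a \<times> 'a. f (fst i + snd i) - f (fst i) - f (snd i) \<in> {0}}"
    using closedin_continuous_preimages_Inter[of pointwise_topology
        "\<lambda>i f. f (fst i + snd i) - f (fst i) - f (snd i)" "\<lambda>_. {0}"]
    by (simp add: continuous_map_diff continuous_map_pointwise_eval)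
  moreover have "closedin pointwise_topology
          {f. \<forall>i::real \<times> 'a. f (fst i *\<^sub>R snd i) - fst i * f (snd i) \<in> {0}}"
    using closedin_continuous_preimages_Inter[of pointwise_topology
        "\<lambda>i f. f (fst i *\<^sub>R snd i) - fst i * f (snd i)" "\<lambda>_. {0}"]
    by (simp add: continuous_map_diff continuous_map_real_mult_left continuous_map_pointwise_eval)
  ultimately have "closedin pointwise_topology
          ({f. \<forall>i::'a \<times> 'a. f (fst i + snd i) - f (fst i) - f (snd i) \<in> {0}}
           \<inter> {f. \<forall>i::real \<times> 'a. f (fst i *\<^sub>R snd i) - fst i * f (snd i) \<in> {0}})"
    by (rule closedin_Int)
  moreover have "{f. \<forall>i::'a \<times> 'a. f (fst i + snd i) - f (fst i) - f (snd i) \<in> {0}}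
           \<inter> {f. \<forall>i::real \<times> 'a. f (fst i *\<^sub>R snd i) - fst i * f (snd i) \<in> {0}} = {f. linear f}"
    by (auto simp: linear_iff diff_eq_eq add.commute)
  ultimately show ?thesis
    by simp
qed

lemma closedin_pointwise_bounded_above: "closedin pointwise_topology {f. \<forall>u\<in>V. f u \<le> M}"
proof -
  have "closedin pointwise_topology {f. \<forall>u. (if u \<in> V then f u else M) \<in> {..M}}"
    using closedin_continuous_preimages_Inter[of pointwise_topology
        "\<lambda>u f. if u \<in> V then f u else M" "\<lambda>_. {..M}"]
    by (simp add: continuous_map_pointwise_eval)
  moreover have "{f. \<forall>u. (if u \<in> V then f u else M) \<in> {..M}} = {f. \<forall>u\<in>V. f u \<le> M}"
    by auto
  ultimately show ?thesis
    by simp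
qed

lemma compactin_wstar_polar:
  assumes lcs: "lcs \<tau>" and V: "openin \<tau> V" "0 \<in> V"
  shows "compactin (wstar \<tau>) {f \<in> dual \<tau>. \<forall>u\<in>V. f u \<le> M}"
proof -
  define L where "L = {f::'a \<Rightarrow> real. linear f \<and> (\<forall>u\<in>V. f u \<le> M)}"
  have "closedin pointwise_topology L"
    unfolding L_def Collect_conj_eq
    by (intro closedin_Int closedin_pointwise_linear closedin_pointwise_bounded_above)
  obtain s where s: "\<And>x. s x > 0" "\<And>x. s x *\<^sub>R x \<in> V" "\<And>x. (- s x) *\<^sub>R x \<in> V"
    using lcs_absorbing[OF lcs V] by metis
  have "L \<subseteq> PiE UNIV (\<lambda>x. {- (M / s x) .. M / s x})"
  proof
    fix f assume "f \<in> L"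
    then have "s x * f x \<le> M \<and> - s x * f x \<le> M" for x
      using s(2,3)[of x] by (auto simp: L_def linear_scale simp del: scaleR_minus_left)
    then have "f x \<le> M / s x \<and> - f x \<le> M / s x" for x
      using s(1)[of x] by (simp add: pos_le_divide_eq mult.commute)
    then show "f \<in> PiE UNIV (\<lambda>x. {- (M / s x) .. M / s x})"
      by (simp add: PiE_UNIV_domain minus_le_iff)
  qed
  moreover have "compactin pointwise_topology (PiE UNIV (\<lambda>x. {- (M / s x) .. M / s x}))"
    by (simp add: compactin_PiE)
  ultimately have "compactin pointwise_topology L"
    using closed_compactin \<open>closedin pointwise_topology L\<close> by blast
  moreover have "L = {f \<in> dual \<tau>. \<forall>u\<in>V. f u \<le> M}"
    using linear_continuous_if_bounded_above_on_nhd[OF lcs V] by (auto simp: L_def dual_def)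
  ultimately show ?thesis
    by (simp add: wstar_def compactin_subtopology)
qed

definition lower_semicontinuous_map :: "'b topology \<Rightarrow> ('b \<Rightarrow> ereal) \<Rightarrow> bool" where
  "lower_semicontinuous_map X f \<longleftrightarrow>
     (\<forall>p\<in>topspace X. \<forall>r::real. ereal r < f p \<longrightarrow> (\<exists>N. openin X N \<and> p \<in> N \<and> (\<forall>q\<in>N. ereal r < f q)))"

lemma openin_lower_semicontinuous_map_superlevel:
  assumes "lower_semicontinuous_map X f"
  shows "openin X {p \<in> topspace X. a < f p}"
proof (subst openin_subopen, intro ballI)
  fix p assume p: "p \<in> {p \<in> topspace X. a < f p}"
  then obtain r where r: "a < ereal r" "ereal r < f p"
    using ereal_dense2 by blast
  then obtain N where N: "openin X N" "p \<in> N" "\<forall>q\<in>N. ereal r < f q"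
    using assms p unfolding lower_semicontinuous_map_def by blast
  have "N \<subseteq> {p \<in> topspace X. a < f p}"
  proof
    fix q assume "q \<in> N"
    then show "q \<in> {p \<in> topspace X. a < f p}"
      using N(3) r(1) openin_subset[OF N(1)] less_trans by blast
  qed
  with N(1,2) show "\<exists>N. openin X N \<and> p \<in> N \<and> N \<subseteq> {p \<in> topspace X. a < f p}"
    by blast
qed

lemma lower_semicontinuous_map_iff_closedin:
  "lower_semicontinuous_map X f \<longleftrightarrow> (\<forall>r::real. closedin X {p \<in> topspace X. f p \<le> ereal r})"
proof -
  have complement: "topspace X - {p \<in> topspace X. f p \<le> ereal r} = {p \<in> topspace X. ereal r < f p}"
    for r :: real
    by (auto simp: not_le)
  show ?thesis
  proof
    assume "lower_semicontinuous_map X f"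
    from openin_lower_semicontinuous_map_superlevel[OF this]
    show "\<forall>r. closedin X {p \<in> topspace X. f p \<le> ereal r}"
      by (simp add: closedin_def complement)
  next
    assume closed: "\<forall>r. closedin X {p \<in> topspace X. f p \<le> ereal r}"
    show "lower_semicontinuous_map X f"
      unfolding lower_semicontinuous_map_def
    proof (intro ballI allI impI)
      fix p r assume "p \<in> topspace X" "ereal r < f p"
      moreover have "openin X {p \<in> topspace X. ereal r < f p}"
        using closed by (simp add: closedin_def complement)
      ultimately show "\<exists>N. openin X N \<and> p \<in> N \<and> (\<forall>q\<in>N. ereal r < f q)"
        by (intro exI[of _ "{p \<in> topspace X. ereal r < f p}"]) auto
    qed
  qed
qed

lemma lower_semicontinuous_map_compose:
  assumes "lower_semicontinuous_map Y f" "continuous_map X Y g"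
  shows "lower_semicontinuous_map X (\<lambda>x. f (g x))"
  unfolding lower_semicontinuous_map_def
proof (intro ballI allI impI)
  fix p r assume p: "p \<in> topspace X" and r: "ereal r < f (g p)"
  have "g p \<in> topspace Y"
    using assms(2) p by (simp add: continuous_map_def Pi_iff)
  then obtain N where N: "openin Y N" "g p \<in> N" "\<forall>q\<in>N. ereal r < f q"
    using assms(1) r unfolding lower_semicontinuous_map_def by blast
  have "openin X {x \<in> topspace X. g x \<in> N}"
    using openin_continuous_map_preimage[OF assms(2) N(1)] .
  then show "\<exists>N. openin X N \<and> p \<in> N \<and> (\<forall>q\<in>N. ereal r < f (g q))"
    using N p by (intro exI[of _ "{x \<in> topspace X. g x \<in> N}"]) auto
qed

lemma ereal_less_add_split:
  fixes a b :: ereal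
  assumes "ereal r < a + b" "a \<noteq> -\<infinity>" "b \<noteq> -\<infinity>"
  shows "\<exists>s t. s + t = r \<and> ereal s < a \<and> ereal t < b"
proof (cases a; cases b)
  fix x y assume "a = ereal x" "b = ereal y"
  with assms show ?thesis
    by (intro exI[of _ "x - (x + y - r) / 2"] exI[of _ "y - (x + y - r) / 2"]) auto
next
  fix x assume "a = ereal x" "b = \<infinity>"
  then show ?thesis
    by (intro exI[of _ "x - 1"] exI[of _ "r - (x - 1)"]) auto
next
  fix y assume "a = \<infinity>" "b = ereal y"
  then show ?thesis
    by (intro exI[of _ "r - (y - 1)"] exI[of _ "y - 1"]) auto
next
  assume "a = \<infinity>" "b = \<infinity>"
  then show ?thesis
    by (intro exI[of _ r] exI[of _ 0]) auto
qed (use assms in auto)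

lemma lower_semicontinuous_map_add:
  assumes "lower_semicontinuous_map X f" "lower_semicontinuous_map X g"
    and "\<And>p. p \<in> topspace X \<Longrightarrow> f p \<noteq> -\<infinity>" "\<And>p. p \<in> topspace X \<Longrightarrow> g p \<noteq> -\<infinity>"
  shows "lower_semicontinuous_map X (\<lambda>p. f p + g p)"
  unfolding lower_semicontinuous_map_def
proof (intro ballI allI impI)
  fix p r assume p: "p \<in> topspace X" and r: "ereal r < f p + g p"
  obtain s t where st: "s + t = r" "ereal s < f p" "ereal t < g p"
    using ereal_less_add_split[OF r assms(3,4)[OF p]] by blast
  obtain N1 where N1: "openin X N1" "p \<in> N1" "\<forall>q\<in>N1. ereal s < f q"
    using assms(1) p st unfolding lower_semicontinuous_map_def by blast
  obtain N2 where N2: "openin X N2" "p \<in> N2" "\<forall>q\<in>N2. ereal t < g q"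
    using assms(2) p st unfolding lower_semicontinuous_map_def by blast
  have "ereal r < f q + g q" if "q \<in> N1 \<inter> N2" for q
    using ereal_add_strict_mono2[of "ereal s" "f q" "ereal t" "g q"] N1(3) N2(3) that st(1) by auto
  then show "\<exists>N. openin X N \<and> p \<in> N \<and> (\<forall>q\<in>N. ereal r < f q + g q)"
    using N1 N2 by (intro exI[of _ "N1 \<inter> N2"]) auto
qed

lemma lower_semicontinuous_map_indicator:
  assumes "closedin X {p \<in> topspace X. P p}"
  shows "lower_semicontinuous_map X (\<lambda>p. if P p then 0 else \<infinity>)"
  unfolding lower_semicontinuous_map_iff_closedin
proof
  fix r :: real
  have "{p \<in> topspace X. (if P p then 0 else \<infinity>) \<le> ereal r}
        = (if 0 \<le> r then {p \<in> topspace X. P p} else {})"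
    by auto
  then show "closedin X {p \<in> topspace X. (if P p then 0 else \<infinity>) \<le> ereal r}"
    using assms by simp
qed

lemma lower_semicontinuous_map_attains_min:
  assumes lsc: "lower_semicontinuous_map X f" and K: "compactin X K" "K \<noteq> {}"
  shows "\<exists>p\<in>K. \<forall>q\<in>K. f p \<le> f q"
proof (rule ccontr)
  define U where "U q = {p \<in> topspace X. f q < f p}" for q
  assume "\<not> ?thesis"
  then have "\<forall>p\<in>K. \<exists>q\<in>K. f q < f p"
    by (auto simp: not_le)
  then have "K \<subseteq> \<Union> (U ` K)"
    using compactin_subset_topspace[OF K(1)] by (auto simp: U_def)
  moreover have "openin X (U q)" for q
    unfolding U_def by (rule openin_lower_semicontinuous_map_superlevel[OF lsc])
  ultimately obtain \<F> where "finite \<F>" "\<F> \<subseteq> U ` K" "K \<subseteq> \<Union>\<F>"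
    using compactinD[OF K(1), of "U ` K"] by auto
  then obtain Q where Q: "Q \<subseteq> K" "finite Q" "K \<subseteq> \<Union> (U ` Q)"
    using finite_subset_image[of \<F> U K] by auto
  then have "f ` Q \<noteq> {}"
    using K(2) by auto
  then have "Min (f ` Q) \<in> f ` Q"
    using Q(2) by (intro Min_in finite_imageI)
  then obtain q0 where q0: "q0 \<in> Q" "f q0 = Min (f ` Q)"
    by (metis imageE)
  then have q0_min: "\<forall>q\<in>Q. f q0 \<le> f q"
    using Q(2) by simp
  obtain q where "q \<in> Q" "f q < f q0"
    using q0(1) Q by (auto simp: U_def)
  with q0_min show False
    by (meson not_less)
qed

lemma lower_semicontinuous_map_attains_Inf:
  assumes lsc: "lower_semicontinuous_map X f" and K: "compactin X K"
    and sublevel: "{p \<in> topspace X. f p \<le> r} \<subseteq> K" and p: "p \<in> topspace X" "f p \<le> r"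
  shows "\<exists>q\<in>topspace X. \<forall>p\<in>topspace X. f q \<le> f p"
proof -
  obtain q where q: "q \<in> K" "\<forall>p\<in>K. f q \<le> f p"
    using lower_semicontinuous_map_attains_min[OF lsc K] sublevel p by blast
  have "f q \<le> r"
    using q sublevel p by force
  then have "f q \<le> f p'" if "p' \<in> topspace X" for p'
    using q sublevel that by (cases "f p' \<le> r") auto
  then show ?thesis
    using q(1) compactin_subset_topspace[OF K] by blast
qed

lemma le_of_convex_combinations_le:
  fixes p L H :: real
  assumes "\<And>t. 0 < t \<Longrightarrow> t < 1 \<Longrightarrow> t * p + (1 - t) * L \<le> H"
  shows "L \<le> H"
proof (rule tendsto_le[of "at_right 0"])
  show "((\<lambda>t. t * p + (1 - t) * L) \<longlongrightarrow> L) (at_right 0)"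
  proof -
    have "((\<lambda>t. t * p + (1 - t) * L) \<longlongrightarrow> 0 * p + (1 - 0) * L) (at_right (0::real))"
      by (intro tendsto_intros)
    then show ?thesis
      by simp
  qed
  show "eventually (\<lambda>t. t * p + (1 - t) * L \<le> H) (at_right 0)"
    by (rule eventually_at_rightI[of 0 1]) (use assms in auto)
qed auto

definition support_function :: "'a set \<Rightarrow> ('a \<Rightarrow> real) \<Rightarrow> ereal" where
  "support_function C y = (SUP c\<in>C. ereal (y c))"

lemma support_function_upper: "c \<in> C \<Longrightarrow> ereal (y c) \<le> support_function C y"
  unfolding support_function_def by (rule SUP_upper)

lemma support_function_le_iff: "support_function C y \<le> b \<longleftrightarrow> (\<forall>c\<in>C. ereal (y c) \<le> b)"
  unfolding support_function_def by (rule SUP_le_iff)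

lemma support_function_not_MInf: "c \<in> C \<Longrightarrow> support_function C y \<noteq> -\<infinity>"
  using support_function_upper[of c C y] by auto

lemma support_function_le_iff_normal_cone:
  assumes "x \<in> C" "y \<in> dual \<tau>"
  shows "support_function C y \<le> ereal (y x) \<longleftrightarrow> y \<in> normal_cone \<tau> C x"
  using assms linear_diff[OF dual_linear[OF assms(2)]]
  by (simp add: support_function_le_iff normal_cone_def)

lemma support_function_lincomb_le:
  assumes "support_function C y1 \<le> ereal q1" "support_function C y2 \<le> ereal q2" "0 \<le> t" "t \<le> 1"
  shows "support_function C (\<lambda>v. t * y1 v + (1 - t) * y2 v) \<le> ereal (t * q1 + (1 - t) * q2)"
  using assms by (auto simp: support_function_le_iff intro!: add_mono mult_left_mono)

lemma lower_semicontinuous_map_support_function: "lower_semicontinuous_map (wstar \<tau>) (support_function C)"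
  unfolding lower_semicontinuous_map_def
proof (intro ballI allI impI)
  fix p r assume p: "p \<in> topspace (wstar \<tau>)" and "ereal r < support_function C p"
  then obtain c where c: "c \<in> C" "r < p c"
    unfolding support_function_def less_SUP_iff by auto
  define N where "N = {f \<in> topspace (wstar \<tau>). f c \<in> {r<..}}"
  have "openin (wstar \<tau>) N"
    unfolding N_def by (rule openin_continuous_map_preimage[OF continuous_map_wstar_eval]) simp
  moreover have "ereal r < support_function C q" if "q \<in> N" for q
    using that c(1) by (auto simp: N_def intro!: less_le_trans[OF _ support_function_upper])
  ultimately show "\<exists>N. openin (wstar \<tau>) N \<and> p \<in> N \<and> (\<forall>q\<in>N. ereal r < support_function C q)"
    using p c by (intro exI[of _ N]) (auto simp: N_def)
qed

lemma ereal_add_eq_iff_lower_bounds: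
  fixes a b :: ereal
  assumes "ereal p \<le> a" "ereal q \<le> b"
  shows "a + b = ereal (p + q) \<longleftrightarrow> a = ereal p \<and> b = ereal q"
  using assms by (cases a; cases b) auto

locale representative_function =
  fixes \<tau> :: "'a::real_vector topology" and h :: "'a \<times> ('a \<Rightarrow> real) \<Rightarrow> ereal"
    and A :: "('a \<times> ('a \<Rightarrow> real)) set"
  assumes lcs: "lcs \<tau>"
    and not_MInf: "\<forall>z\<in>topspace (Ztop \<tau>). h z \<noteq> -\<infinity>"
    and convex_ineq: "\<forall>z\<in>topspace (Ztop \<tau>). \<forall>w\<in>topspace (Ztop \<tau>). \<forall>t::real. 0 < t \<and> t < 1 \<longrightarrow>
            h (zcomb t z w) \<le> ereal t * h z + ereal (1 - t) * h w"
    and closed_sublevel: "\<forall>r::real. closedin (Ztop \<tau>) {z \<in> topspace (Ztop \<tau>). h z \<le> ereal r}"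
    and coupling_le: "\<forall>z\<in>topspace (Ztop \<tau>). coupling z \<le> h z"
    and graph: "{z \<in> topspace (Ztop \<tau>). h z = coupling z} = A"

lemma representable_iff_representative_function:
  "representable \<tau> A \<longleftrightarrow>
     (\<exists>h. representative_function \<tau> h A \<and> (\<exists>z\<in>topspace (Ztop \<tau>). h z \<noteq> \<infinity>))"
  if "lcs \<tau>"
  using that by (auto simp: representable_def representative_function_def)

context representative_function
begin

lemma topspace_Z [simp]: "topspace (Ztop \<tau>) = UNIV \<times> dual \<tau>"
  using lcs by (simp add: Ztop_def)

lemma graph_iff: "(x, a) \<in> A \<longleftrightarrow> a \<in> dual \<tau> \<and> h (x, a) = ereal (a x)"
  using graph by (auto simp: coupling_def)

lemma coupling_le_h: "a \<in> dual \<tau> \<Longrightarrow> ereal (a x) \<le> h (x, a)"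
  using coupling_le by (auto simp: coupling_def)

lemma shift_not_MInf: "a \<in> dual \<tau> \<Longrightarrow> y \<in> dual \<tau> \<Longrightarrow> h (x, a - y) \<noteq> -\<infinity>"
  using not_MInf dual_diff[of a \<tau> y] by auto

lemma lower_semicontinuous: "lower_semicontinuous_map (Ztop \<tau>) h"
  using closed_sublevel by (simp add: lower_semicontinuous_map_iff_closedin)

text \<open>Representability forces monotonicity: convexity along the segment from (x0, a0) to (x, w)
  and h \<ge> c there give t \<langle>x, w\<rangle> + (1 - t) (\<langle>x0, w\<rangle> + \<langle>x, a0\<rangle> - \<langle>x0, a0\<rangle>) \<le> h (x, w).\<close>

lemma graph_lower_bound:
  assumes x0a0: "(x0, a0) \<in> A" and w: "w \<in> dual \<tau>"
  shows "ereal (w x0 + a0 x - a0 x0) \<le> h (x, w)"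
proof (cases "h (x, w)")
  case (real H)
  have a0: "a0 \<in> dual \<tau>" "h (x0, a0) = ereal (a0 x0)"
    using x0a0 graph_iff by auto
  have "t * w x + (1 - t) * (w x0 + a0 x - a0 x0) \<le> H" if t: "0 < t" "t < 1" for t
  proof -
    let ?z = "zcomb t (x, w) (x0, a0)"
    have "?z \<in> topspace (Ztop \<tau>)"
      using dual_lincomb[OF w a0(1)] by (simp add: zcomb_def)
    then have "coupling ?z \<le> h ?z"
      using coupling_le by blast
    also have "\<dots> \<le> ereal t * h (x, w) + ereal (1 - t) * h (x0, a0)"
      using convex_ineq w a0(1) t by simp
    also have "\<dots> = ereal (t * H + (1 - t) * a0 x0)"
      using real a0(2) by simp
    finally have "coupling ?z \<le> ereal (t * H + (1 - t) * a0 x0)" .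
    moreover have "coupling ?z = ereal (t * (t * w x + (1 - t) * w x0) + (1 - t) * (t * a0 x + (1 - t) * a0 x0))"
      using dual_linear[OF w] dual_linear[OF a0(1)]
      by (simp add: coupling_def zcomb_def linear_add linear_scale)
    also have "\<dots> = ereal (t * (t * w x + (1 - t) * (w x0 + a0 x - a0 x0)) + (1 - t) * a0 x0)"
      by (simp add: algebra_simps)
    ultimately have "t * (t * w x + (1 - t) * (w x0 + a0 x - a0 x0)) \<le> t * H"
      by simp
    then show ?thesis
      using t by simp
  qed
  then have "w x0 + a0 x - a0 x0 \<le> H"
    by (rule le_of_convex_combinations_le)
  then show ?thesis
    using real by simp
qed (use not_MInf w in auto)

end

locale representative_plus_normal_cone = representative_function +
  fixes C and x0 and a0 and V
  assumes C_closed: "closedin \<tau> C" and C_convex: "convex C"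
    and x0a0: "(x0, a0) \<in> A"
    and V: "openin \<tau> V" "0 \<in> V" "\<forall>u\<in>V. x0 + u \<in> C"
begin

lemma a0_dual: "a0 \<in> dual \<tau>"
  using x0a0 graph_iff by blast

lemma x0_in_C: "x0 \<in> C"
  using V by force

text \<open>The representative of A + N_C: the infimal convolution, in the dual variable, of h with
  the representative (x, y) \<mapsto> \<iota>_C x + \<sigma>_C y of the normal cone.\<close>

definition infconv_term :: "'a \<times> ('a \<Rightarrow> real) \<Rightarrow> ('a \<Rightarrow> real) \<Rightarrow> ereal" where
  "infconv_term z y =
     (if fst z \<in> C then 0 else \<infinity>) + (h (fst z, snd z - y) + support_function C y)"

definition infconv :: "'a \<times> ('a \<Rightarrow> real) \<Rightarrow> ereal" where
  "infconv z = (INF y\<in>dual \<tau>. infconv_term z y)"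

lemma infconv_term_in_C: "x \<in> C \<Longrightarrow> infconv_term (x, a) y = h (x, a - y) + support_function C y"
  by (simp add: infconv_term_def)

lemma infconv_term_notin_C:
  assumes "x \<notin> C" "a \<in> dual \<tau>" "y \<in> dual \<tau>"
  shows "infconv_term (x, a) y = \<infinity>"
proof -
  have "h (x, a - y) + support_function C y \<noteq> -\<infinity>"
    using shift_not_MInf[OF assms(2,3)] support_function_not_MInf[OF x0_in_C] by auto
  then show ?thesis
    using assms(1) by (simp add: infconv_term_def)
qed

lemma coupling_le_infconv_term:
  assumes "a \<in> dual \<tau>" "y \<in> dual \<tau>"
  shows "ereal (a x) \<le> infconv_term (x, a) y"
proof (cases "x \<in> C")
  case True
  have "ereal ((a - y) x) + ereal (y x) \<le> h (x, a - y) + support_function C y"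
    using coupling_le_h[OF dual_diff[OF assms]] support_function_upper[OF True] by (rule add_mono)
  then show ?thesis
    using True by (simp add: infconv_term_in_C)
qed (use assms infconv_term_notin_C in simp)

text \<open>Coercivity in the dual variable; this is where x0 \<in> D(A) \<inter> int C is used.\<close>

lemma infconv_term_sublevel_polar:
  assumes "a \<in> dual \<tau>" "y \<in> dual \<tau>" "infconv_term (x, a) y \<le> ereal r"
  shows "\<forall>u\<in>V. y u \<le> r - (a x0 + a0 x) + a0 x0"
proof
  fix u assume u: "u \<in> V"
  have "x \<in> C"
    using assms infconv_term_notin_C by fastforce
  have "ereal ((a - y) x0 + a0 x - a0 x0) + ereal (y (x0 + u)) \<le> h (x, a - y) + support_function C y"
    using graph_lower_bound[OF x0a0 dual_diff[OF assms(1,2)]] support_function_upper[of "x0 + u"] V(3) u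
    by (intro add_mono) auto
  also have "\<dots> \<le> ereal r"
    using assms(3) \<open>x \<in> C\<close> by (simp add: infconv_term_in_C)
  finally have "(a - y) x0 + a0 x - a0 x0 + y (x0 + u) \<le> r"
    by simp
  then show "y u \<le> r - (a x0 + a0 x) + a0 x0"
    using linear_add[OF dual_linear[OF assms(2)]] by simp
qed

abbreviation Z_wstar :: "(('a \<times> ('a \<Rightarrow> real)) \<times> ('a \<Rightarrow> real)) topology" where
  "Z_wstar \<equiv> prod_topology (Ztop \<tau>) (wstar \<tau>)"

lemma continuous_map_Z_wstar_point: "continuous_map Z_wstar \<tau> (\<lambda>p. fst (fst p))"
proof -
  have "continuous_map (Ztop \<tau>) \<tau> fst"
    unfolding Ztop_def by (rule continuous_map_fst)
  then show ?thesis
    using continuous_map_compose[OF continuous_map_fst] by (fastforce simp: o_def)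
qed

lemma continuous_map_Z_wstar_dual: "continuous_map Z_wstar (wstar \<tau>) (\<lambda>p. snd (fst p))"
proof -
  have "continuous_map (Ztop \<tau>) (wstar \<tau>) snd"
    unfolding Ztop_def by (rule continuous_map_snd)
  then show ?thesis
    using continuous_map_compose[OF continuous_map_fst] by (fastforce simp: o_def)
qed

lemma continuous_map_shift:
  "continuous_map Z_wstar (Ztop \<tau>) (\<lambda>p. (fst (fst p), snd (fst p) - snd p))"
proof -
  have "continuous_map Z_wstar euclideanreal (\<lambda>p. snd (fst p) v - snd p v)" for v
    using continuous_map_compose[OF continuous_map_Z_wstar_dual continuous_map_wstar_eval]
      continuous_map_compose[OF continuous_map_snd continuous_map_wstar_eval]
    by (intro continuous_map_diff) (simp_all add: o_def)
  then have "continuous_map Z_wstar pointwise_topology (\<lambda>p. snd (fst p) - snd p)"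
    by (simp add: continuous_map_componentwise_UNIV)
  moreover have "(\<lambda>p. snd (fst p) - snd p) \<in> topspace Z_wstar \<rightarrow> dual \<tau>"
    using dual_diff by auto
  ultimately have "continuous_map Z_wstar (wstar \<tau>) (\<lambda>p. snd (fst p) - snd p)"
    unfolding wstar_def by (rule continuous_map_into_subtopology)
  then show ?thesis
    using continuous_map_Z_wstar_point by (simp add: Ztop_def continuous_map_pairwise o_def)
qed

lemma lower_semicontinuous_infconv_term:
  "lower_semicontinuous_map Z_wstar (\<lambda>p. infconv_term (fst p) (snd p))"
proof -
  have "closedin Z_wstar {p \<in> topspace Z_wstar. fst (fst p) \<in> C}"
    using closedin_continuous_map_preimage[OF continuous_map_Z_wstar_point C_closed] lcs by simp
  then have indicator: "lower_semicontinuous_map Z_wstar (\<lambda>p. if fst (fst p) \<in> C then 0 else \<infinity>)"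
    by (rule lower_semicontinuous_map_indicator)
  have "lower_semicontinuous_map Z_wstar (\<lambda>p. h (fst (fst p), snd (fst p) - snd p))"
    by (rule lower_semicontinuous_map_compose[OF lower_semicontinuous continuous_map_shift])
  moreover have "lower_semicontinuous_map Z_wstar (\<lambda>p. support_function C (snd p))"
    by (rule lower_semicontinuous_map_compose[OF lower_semicontinuous_map_support_function continuous_map_snd])
  ultimately have "lower_semicontinuous_map Z_wstar
      (\<lambda>p. h (fst (fst p), snd (fst p) - snd p) + support_function C (snd p))"
    using shift_not_MInf support_function_not_MInf[OF x0_in_C]
    by (intro lower_semicontinuous_map_add) auto
  then have "lower_semicontinuous_map Z_wstar (\<lambda>p. (if fst (fst p) \<in> C then 0 else \<infinity>)
      + (h (fst (fst p), snd (fst p) - snd p) + support_function C (snd p)))"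
    using shift_not_MInf support_function_not_MInf[OF x0_in_C]
    by (intro lower_semicontinuous_map_add[OF indicator]) auto
  then show ?thesis
    by (simp add: infconv_term_def)
qed

lemma lower_semicontinuous_infconv_term_slice:
  assumes "a \<in> dual \<tau>"
  shows "lower_semicontinuous_map (wstar \<tau>) (infconv_term (x, a))"
proof -
  have "continuous_map (wstar \<tau>) Z_wstar (\<lambda>y. ((x, a), y))"
    using assms lcs by (simp add: continuous_map_pairwise o_def)
  from lower_semicontinuous_map_compose[OF lower_semicontinuous_infconv_term this]
  show ?thesis
    by (simp add: o_def)
qed


lemma infconv_le_infconv_term: "y \<in> dual \<tau> \<Longrightarrow> infconv z \<le> infconv_term z y"
  unfolding infconv_def by (rule INF_lower)

lemma coupling_le_infconv: "a \<in> dual \<tau> \<Longrightarrow> ereal (a x) \<le> infconv (x, a)"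
  unfolding infconv_def by (rule INF_greatest) (rule coupling_le_infconv_term)

lemma infconv_attained:
  assumes a: "a \<in> dual \<tau>"
  shows "\<exists>y\<in>dual \<tau>. infconv_term (x, a) y = infconv (x, a)"
proof (cases "infconv (x, a) = \<infinity>")
  case True
  then show ?thesis
    using infconv_le_infconv_term[OF dual_zero, of "(x, a)"] by (intro bexI[OF _ dual_zero]) simp
next
  case False
  then obtain y1 where y1: "y1 \<in> dual \<tau>" "infconv_term (x, a) y1 \<noteq> \<infinity>"
    unfolding infconv_def by (metis INF_top_conv(1) top_ereal_def)
  then obtain r where r: "infconv_term (x, a) y1 = ereal r"
    using coupling_le_infconv_term[OF a y1(1), of x] by (cases "infconv_term (x, a) y1") auto
  define K where "K = {f \<in> dual \<tau>. \<forall>u\<in>V. f u \<le> r - (a x0 + a0 x) + a0 x0}"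
  have K: "compactin (wstar \<tau>) K"
    unfolding K_def by (rule compactin_wstar_polar[OF lcs V(1,2)])
  have sublevel: "{y \<in> topspace (wstar \<tau>). infconv_term (x, a) y \<le> ereal r} \<subseteq> K"
    using infconv_term_sublevel_polar[OF a] by (auto simp: K_def)
  have "\<exists>y\<in>topspace (wstar \<tau>). \<forall>y'\<in>topspace (wstar \<tau>). infconv_term (x, a) y \<le> infconv_term (x, a) y'"
    by (rule lower_semicontinuous_map_attains_Inf[OF lower_semicontinuous_infconv_term_slice[OF a] K sublevel])
      (use y1(1) r in auto)
  then obtain y where y: "y \<in> dual \<tau>" "\<forall>y'\<in>dual \<tau>. infconv_term (x, a) y \<le> infconv_term (x, a) y'"
    by auto
  then have "infconv_term (x, a) y \<le> infconv (x, a)"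
    unfolding infconv_def by (intro INF_greatest) auto
  then show ?thesis
    using y(1) infconv_le_infconv_term[OF y(1), of "(x, a)"] by (intro bexI[of _ y]) auto
qed

lemma infconv_sublevel_witness:
  assumes "a \<in> dual \<tau>" "infconv (x, a) \<le> ereal r"
  obtains y where "y \<in> dual \<tau>" "infconv_term (x, a) y \<le> ereal r"
    "\<forall>u\<in>V. y u \<le> r - (a x0 + a0 x) + a0 x0"
proof -
  obtain y where "y \<in> dual \<tau>" "infconv_term (x, a) y = infconv (x, a)"
    using infconv_attained[OF assms(1)] by blast
  then show ?thesis
    using that infconv_term_sublevel_polar[OF assms(1)] assms(2) by auto
qed

lemma infconv_term_gt_on_tube:
  assumes z0: "z0 \<in> topspace (Ztop \<tau>)" and r: "ereal r < infconv z0"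
    and K: "compactin (wstar \<tau>) K"
  obtains U W where "openin (Ztop \<tau>) U" "openin (wstar \<tau>) W" "z0 \<in> U" "K \<subseteq> W"
    "\<forall>z\<in>U. \<forall>y\<in>W. ereal r < infconv_term z y"
proof -
  define S where "S = {p \<in> topspace Z_wstar. ereal r < infconv_term (fst p) (snd p)}"
  have "openin Z_wstar S"
    unfolding S_def by (rule openin_lower_semicontinuous_map_superlevel[OF lower_semicontinuous_infconv_term])
  moreover have "(z0, y) \<in> S" if "y \<in> K" for y
  proof -
    have "y \<in> dual \<tau>"
      using that compactin_subset_topspace[OF K] by auto
    then show ?thesis
      using less_le_trans[OF r infconv_le_infconv_term] z0 by (simp add: S_def)
  qed
  then have "{z0} \<times> K \<subseteq> S"
    by auto
  ultimately show ?thesis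
    using tube_lemma_right[of "Ztop \<tau>" "wstar \<tau>" S K z0] K z0 that by (force simp: S_def)
qed

lemma continuous_map_coercivity_offset:
  "continuous_map (Ztop \<tau>) euclideanreal (\<lambda>z. snd z x0 + a0 (fst z))"
proof -
  have "continuous_map (Ztop \<tau>) euclideanreal (\<lambda>z. snd z x0)"
    using continuous_map_compose[OF continuous_map_snd continuous_map_wstar_eval]
    by (simp add: Ztop_def o_def)
  moreover have "continuous_map (Ztop \<tau>) euclideanreal (\<lambda>z. a0 (fst z))"
    using continuous_map_compose[OF continuous_map_fst] a0_dual
    by (fastforce simp: Ztop_def o_def dual_def)
  ultimately show ?thesis
    by (rule continuous_map_add)
qed

text \<open>The minimisers for z near z0 all lie in one compact polar set, so the tube lemma applies.\<close>

lemma lower_semicontinuous_infconv: "lower_semicontinuous_map (Ztop \<tau>) infconv"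
  unfolding lower_semicontinuous_map_def
proof (intro ballI allI impI)
  fix z0 r assume z0: "z0 \<in> topspace (Ztop \<tau>)" and r: "ereal r < infconv z0"
  define g where "g z = snd z x0 + a0 (fst z)" for z
  define K where "K = {f \<in> dual \<tau>. \<forall>u\<in>V. f u \<le> r - (g z0 - 1) + a0 x0}"
  have "compactin (wstar \<tau>) K"
    unfolding K_def by (rule compactin_wstar_polar[OF lcs V(1,2)])
  then obtain U W where UW: "openin (Ztop \<tau>) U" "z0 \<in> U" "K \<subseteq> W"
      "\<forall>z\<in>U. \<forall>y\<in>W. ereal r < infconv_term z y"
    using infconv_term_gt_on_tube[OF z0 r] by metis
  define N where "N = {z \<in> topspace (Ztop \<tau>). g z \<in> {g z0 - 1<..}}"
  have "openin (Ztop \<tau>) N"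
    unfolding N_def g_def by (rule openin_continuous_map_preimage[OF continuous_map_coercivity_offset]) simp
  moreover have "ereal r < infconv (x, a)" if z: "(x, a) \<in> U \<inter> N" for x a
  proof (rule ccontr)
    assume "\<not> ereal r < infconv (x, a)"
    moreover have "a \<in> dual \<tau>"
      using z by (simp add: N_def)
    ultimately obtain y where y: "y \<in> dual \<tau>" "infconv_term (x, a) y \<le> ereal r"
        "\<forall>u\<in>V. y u \<le> r - (a x0 + a0 x) + a0 x0"
      using infconv_sublevel_witness by (metis not_less)
    moreover have "g z0 - 1 < a x0 + a0 x"
      using z by (simp add: N_def g_def)
    ultimately have "y \<in> W"
      using UW(3) by (force simp: K_def)
    then show False
      using UW(4) y(2) z by (meson IntD1 not_less)
  qed
  ultimately show "\<exists>N. openin (Ztop \<tau>) N \<and> z0 \<in> N \<and> (\<forall>z\<in>N. ereal r < infconv z)"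
    using UW(1,2) z0 by (intro exI[of _ "U \<inter> N"]) (auto simp: N_def)
qed

lemma infconv_term_finite:
  assumes "a \<in> dual \<tau>" "y \<in> dual \<tau>" "infconv_term (x, a) y = ereal v"
  obtains p q where "x \<in> C" "h (x, a - y) = ereal p" "support_function C y = ereal q" "v = p + q"
proof -
  have "x \<in> C"
    using assms infconv_term_notin_C by fastforce
  moreover have "h (x, a - y) \<noteq> -\<infinity>" "support_function C y \<noteq> -\<infinity>"
    using shift_not_MInf[OF assms(1,2)] support_function_not_MInf[OF x0_in_C] .
  moreover have "h (x, a - y) + support_function C y = ereal v"
    using assms(3) \<open>x \<in> C\<close> by (simp add: infconv_term_in_C)
  ultimately show ?thesis
    using that by (cases "h (x, a - y)"; cases "support_function C y") auto
qed

lemma infconv_term_convex: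
  assumes "a1 \<in> dual \<tau>" "a2 \<in> dual \<tau>" "y1 \<in> dual \<tau>" "y2 \<in> dual \<tau>"
    and "infconv_term (x1, a1) y1 = ereal v1" "infconv_term (x2, a2) y2 = ereal v2"
    and t: "0 < t" "t < 1"
  shows "infconv_term (zcomb t (x1, a1) (x2, a2)) (\<lambda>v. t * y1 v + (1 - t) * y2 v)
           \<le> ereal (t * v1 + (1 - t) * v2)"
proof -
  obtain p1 q1 where 1: "x1 \<in> C" "h (x1, a1 - y1) = ereal p1" "support_function C y1 = ereal q1" "v1 = p1 + q1"
    using infconv_term_finite[OF assms(1,3,5)] .
  obtain p2 q2 where 2: "x2 \<in> C" "h (x2, a2 - y2) = ereal p2" "support_function C y2 = ereal q2" "v2 = p2 + q2"
    using infconv_term_finite[OF assms(2,4,6)] .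
  have "t *\<^sub>R x1 + (1 - t) *\<^sub>R x2 \<in> C"
    using 1(1) 2(1) t C_convex by (simp add: convex_def)
  then have "infconv_term (zcomb t (x1, a1) (x2, a2)) (\<lambda>v. t * y1 v + (1 - t) * y2 v)
      = h (zcomb t (x1, a1 - y1) (x2, a2 - y2)) + support_function C (\<lambda>v. t * y1 v + (1 - t) * y2 v)"
    by (simp add: zcomb_def infconv_term_in_C fun_diff_def algebra_simps)
  also have "\<dots> \<le> ereal (t * p1 + (1 - t) * p2) + ereal (t * q1 + (1 - t) * q2)"
  proof (rule add_mono)
    show "h (zcomb t (x1, a1 - y1) (x2, a2 - y2)) \<le> ereal (t * p1 + (1 - t) * p2)"
      using convex_ineq[rule_format, of "(x1, a1 - y1)" "(x2, a2 - y2)" t]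
        dual_diff[OF assms(1,3)] dual_diff[OF assms(2,4)] 1(2) 2(2) t
      by simp
    show "support_function C (\<lambda>v. t * y1 v + (1 - t) * y2 v) \<le> ereal (t * q1 + (1 - t) * q2)"
      using 1(3) 2(3) t by (intro support_function_lincomb_le) auto
  qed
  also have "\<dots> = ereal (t * v1 + (1 - t) * v2)"
    using 1(4) 2(4) by (simp add: algebra_simps)
  finally show ?thesis .
qed

lemma infconv_convex:
  assumes z: "z \<in> topspace (Ztop \<tau>)" and w: "w \<in> topspace (Ztop \<tau>)" and t: "0 < t" "t < 1"
  shows "infconv (zcomb t z w) \<le> ereal t * infconv z + ereal (1 - t) * infconv w"
proof -
  obtain x1 a1 x2 a2 where zw: "z = (x1, a1)" "w = (x2, a2)" "a1 \<in> dual \<tau>" "a2 \<in> dual \<tau>"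
    using z w by auto
  have not_MInf: "infconv z \<noteq> -\<infinity>" "infconv w \<noteq> -\<infinity>"
    using coupling_le_infconv[of a1 x1] coupling_le_infconv[of a2 x2] zw by auto
  show ?thesis
  proof (cases "infconv z = \<infinity> \<or> infconv w = \<infinity>")
    case True
    then have "ereal t * infconv z + ereal (1 - t) * infconv w = \<infinity>"
      using not_MInf t by (cases "infconv z"; cases "infconv w") (auto simp: ereal_mult_infty)
    then show ?thesis
      by (simp only: top_ereal_def[symmetric] top_greatest)
  next
    case False
    then obtain v1 v2 where v: "infconv z = ereal v1" "infconv w = ereal v2"
      using not_MInf by (cases "infconv z"; cases "infconv w") auto
    obtain y1 y2 where y: "y1 \<in> dual \<tau>" "infconv_term z y1 = infconv z"
        "y2 \<in> dual \<tau>" "infconv_term w y2 = infconv w"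
      using infconv_attained zw by metis
    have "infconv (zcomb t z w) \<le> infconv_term (zcomb t z w) (\<lambda>v. t * y1 v + (1 - t) * y2 v)"
      using dual_lincomb[OF y(1,3)] by (rule infconv_le_infconv_term)
    also have "\<dots> \<le> ereal (t * v1 + (1 - t) * v2)"
      using infconv_term_convex[of a1 a2 y1 y2 x1 v1 x2 v2 t] zw y v t by simp
    finally show ?thesis
      using v by simp
  qed
qed

lemma infconv_term_eq_coupling_iff:
  assumes a: "a \<in> dual \<tau>" and y: "y \<in> dual \<tau>"
  shows "infconv_term (x, a) y = ereal (a x) \<longleftrightarrow> (x, a - y) \<in> A \<and> y \<in> normal_cone \<tau> C x"
proof (cases "x \<in> C")
  case True
  have "infconv_term (x, a) y = ereal (a x)
      \<longleftrightarrow> h (x, a - y) + support_function C y = ereal ((a - y) x + y x)"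
    using True by (simp add: infconv_term_in_C)
  also have "\<dots> \<longleftrightarrow> h (x, a - y) = ereal ((a - y) x) \<and> support_function C y = ereal (y x)"
    by (rule ereal_add_eq_iff_lower_bounds[OF coupling_le_h[OF dual_diff[OF a y]] support_function_upper[OF True]])
  also have "\<dots> \<longleftrightarrow> (x, a - y) \<in> A \<and> y \<in> normal_cone \<tau> C x"
    using graph_iff dual_diff[OF a y] support_function_le_iff_normal_cone[OF True y] support_function_upper[OF True, of y]
    by (auto simp del: fun_diff_def)
  finally show ?thesis .
qed (use assms infconv_term_notin_C in \<open>simp add: normal_cone_def\<close>)

lemma infconv_eq_coupling_iff:
  assumes a: "a \<in> dual \<tau>"
  shows "infconv (x, a) = ereal (a x) \<longleftrightarrow> (\<exists>y\<in>dual \<tau>. (x, a - y) \<in> A \<and> y \<in> normal_cone \<tau> C x)"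
proof
  assume "infconv (x, a) = ereal (a x)"
  moreover obtain y where "y \<in> dual \<tau>" "infconv_term (x, a) y = infconv (x, a)"
    using infconv_attained[OF a] by blast
  ultimately show "\<exists>y\<in>dual \<tau>. (x, a - y) \<in> A \<and> y \<in> normal_cone \<tau> C x"
    using infconv_term_eq_coupling_iff[OF a] by auto
next
  assume "\<exists>y\<in>dual \<tau>. (x, a - y) \<in> A \<and> y \<in> normal_cone \<tau> C x"
  then obtain y where "y \<in> dual \<tau>" "infconv_term (x, a) y = ereal (a x)"
    using infconv_term_eq_coupling_iff[OF a] by blast
  then show "infconv (x, a) = ereal (a x)"
    using infconv_le_infconv_term coupling_le_infconv[OF a] by (metis order_antisym)
qed

lemma graph_infconv: "{z \<in> topspace (Ztop \<tau>). infconv z = coupling z} = plus_normal \<tau> A C"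
proof (intro equalityI subsetI)
  fix z assume "z \<in> {z \<in> topspace (Ztop \<tau>). infconv z = coupling z}"
  then obtain x a where z: "z = (x, a)" "a \<in> dual \<tau>" "infconv (x, a) = ereal (a x)"
    by (auto simp: coupling_def)
  then obtain y where "(x, a - y) \<in> A" "y \<in> normal_cone \<tau> C x"
    using infconv_eq_coupling_iff by blast
  moreover have "a = (\<lambda>v. (a - y) v + y v)"
    by simp
  ultimately show "z \<in> plus_normal \<tau> A C"
    unfolding plus_normal_def z(1) by blast
next
  fix z assume "z \<in> plus_normal \<tau> A C"
  then obtain x b n where z: "z = (x, \<lambda>v. b v + n v)" and "(x, b) \<in> A" "n \<in> normal_cone \<tau> C x"
    unfolding plus_normal_def by blast
  moreover have "b \<in> dual \<tau>" "n \<in> dual \<tau>"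
    using \<open>(x, b) \<in> A\<close> \<open>n \<in> normal_cone \<tau> C x\<close> graph_iff by (auto simp: normal_cone_def split: if_splits)
  moreover have "(\<lambda>v. b v + n v) - n = b"
    by auto
  ultimately show "z \<in> {z \<in> topspace (Ztop \<tau>). infconv z = coupling z}"
    using infconv_eq_coupling_iff[of "\<lambda>v. b v + n v" x] dual_add by (auto simp: coupling_def)
qed

lemma representable_plus_normal: "representable \<tau> (plus_normal \<tau> A C)"
proof -
  have "representative_function \<tau> infconv (plus_normal \<tau> A C)"
  proof
    show "\<forall>z\<in>topspace (Ztop \<tau>). infconv z \<noteq> -\<infinity>"
    proof clarsimp
      fix x a assume "a \<in> dual \<tau>" "infconv (x, a) = -\<infinity>"
      then show False
        using coupling_le_infconv[of a x] by simp
    qed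
    show "\<forall>z\<in>topspace (Ztop \<tau>). coupling z \<le> infconv z"
      using coupling_le_infconv by (auto simp: coupling_def)
    show "\<forall>r. closedin (Ztop \<tau>) {z \<in> topspace (Ztop \<tau>). infconv z \<le> ereal r}"
      using lower_semicontinuous_infconv by (simp add: lower_semicontinuous_map_iff_closedin)
  qed (use lcs infconv_convex graph_infconv in auto)
  moreover have "(\<lambda>_. 0) \<in> normal_cone \<tau> C x0" "a0 - (\<lambda>_. 0) = a0"
    using x0_in_C dual_zero by (auto simp: normal_cone_def)
  then have "infconv (x0, a0) = ereal (a0 x0)"
    using infconv_eq_coupling_iff[OF a0_dual, of x0] x0a0 dual_zero by metis
  ultimately show ?thesis
    using representable_iff_representative_function[OF lcs] a0_dual by force
qed

end

lemma lcs_interior_of_translate: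
  assumes "lcs \<tau>" "x \<in> \<tau> interior_of C"
  obtains V where "openin \<tau> V" "0 \<in> V" "\<forall>u\<in>V. x + u \<in> C"
proof -
  obtain U where U: "openin \<tau> U" "x \<in> U" "U \<subseteq> C"
    using assms(2) by (auto simp: interior_of_def)
  have "openin \<tau> {u. 1 *\<^sub>R u + x \<in> U}"
    using openin_continuous_map_preimage[OF lcs_continuous_map_affine[OF assms(1), of 1 x] U(1)] assms(1)
    by simp
  with U show ?thesis
    using that[of "{u. 1 *\<^sub>R u + x \<in> U}"] by (auto simp: add.commute)
qed

theorem theorem4p3:
  fixes \<tau> :: "'a::real_vector topology"
    and A :: "('a \<times> ('a \<Rightarrow> real)) set"
    and C :: "'a set"
  assumes "lcs \<tau>"
    and "\<exists>x::'a. x \<noteq> 0"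
    and "A \<subseteq> UNIV \<times> dual \<tau>"
    and "representable \<tau> A"
    and "closedin \<tau> C"
    and "convex C"
    and "Domain A \<inter> (\<tau> interior_of C) \<noteq> {}"
  shows "representable \<tau> (plus_normal \<tau> A C)"
proof -
  obtain h where h: "representative_function \<tau> h A"
    using assms(1,4) representable_iff_representative_function by blast
  obtain x0 a0 where x0a0: "(x0, a0) \<in> A" and "x0 \<in> \<tau> interior_of C"
    using assms(7) by auto
  then obtain V where V: "openin \<tau> V" "0 \<in> V" "\<forall>u\<in>V. x0 + u \<in> C"
    using lcs_interior_of_translate[OF assms(1)] by blast
  interpret representative_function \<tau> h A
    by (rule h)
  interpret representative_plus_normal_cone \<tau> h A C x0 a0 V
    by unfold_locales (use assms(5,6) x0a0 V in auto)
  show ?thesis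
    by (rule representable_plus_normal)
qed

end
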